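(* Let $X$ be a reflexive Banach space, $S\subseteq\partial B_1(0)$ a nonempty set, $\varphi:X\to\mathbb{R}$ locally Lipschitz continuous, and $\mu<\inf_S\varphi$ a real number. Suppose that (a) $\lim_{t\to\infty}\varphi(tu)=-\infty$ for all $u\in S$, and (b) $\langle v^*,v\rangle<0$ for all $v\in\varphi^{-1}(\mu)$ and all $v^*\in\partial\varphi(v)$. Then there exists a continuous mapping $\tau:S\to(1,\infty)$ such that for all $u\in S$ and all $t\ge1$: $\varphi(tu)>\mu$ if $t<\tau(u)$, $\varphi(tu)=\mu$ if $t=\tau(u)$, and $\varphi(tu)<\mu$ if $t>\tau(u)$.
   Context: $B_1(0)$ is the open unit ball of $X$ and $\partial B_1(0)$ the unit sphere; $\langle\cdot,\cdot\rangle$ is the duality pairing between $X^*$ and $X$. For a locally Lipschitz $\varphi:X\to\mathbb{R}$, the Clarke generalized directional derivative is $\varphi^\circ(u;v)=\limsup_{w\to u,\,t\to0^+}\frac{\varphi(w+tv)-\varphi(w)}{t}$ and the Clarke generalized subdifferential is $\partial\varphi(u)=\{u^*\in X^*:\langle u^*,v\rangle\le\varphi^\circ(u;v)\ \forall v\in X\}$. *)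

theory Defs
  imports "HOL-Analysis.Analysis"
begin

text \<open>The dual space X* is modelled as the bounded linear functionals 'a \<Rightarrow>L real;
  the duality pairing is application.\<close>

definition reflexive_space :: "'a::real_normed_vector itself \<Rightarrow> bool" where
  "reflexive_space _ \<longleftrightarrow>
     (\<forall>F :: ('a \<Rightarrow>\<^sub>L real) \<Rightarrow>\<^sub>L real. \<exists>x::'a. \<forall>f. blinfun_apply F f = blinfun_apply f x)"

definition locally_lipschitz :: "('a::metric_space \<Rightarrow> real) \<Rightarrow> bool" where
  "locally_lipschitz \<phi> \<longleftrightarrow>
     (\<forall>u. \<exists>r>0. \<exists>L. \<forall>x\<in>ball u r. \<forall>y\<in>ball u r. \<bar>\<phi> x - \<phi> y\<bar> \<le> L * dist x y)"

text \<open>Clarke generalized directional derivative, as a limsup over w \<rightarrow> u, t \<rightarrow> 0+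
  (valued in the extended reals; finite for locally Lipschitz functions).\<close>
definition clarke_dd :: "('a::real_normed_vector \<Rightarrow> real) \<Rightarrow> 'a \<Rightarrow> 'a \<Rightarrow> ereal" where
  "clarke_dd \<phi> u v =
     Limsup (at (u, 0) within (UNIV \<times> {0<..}))
       (\<lambda>(w, t). ereal ((\<phi> (w + t *\<^sub>R v) - \<phi> w) / t))"

definition clarke_subdiff :: "('a::real_normed_vector \<Rightarrow> real) \<Rightarrow> 'a \<Rightarrow> ('a \<Rightarrow>\<^sub>L real) set" where
  "clarke_subdiff \<phi> u = {x. \<forall>v. ereal (blinfun_apply x v) \<le> clarke_dd \<phi> u v}"

end

theory Submission
  imports Defs
begin

text \<open>
  Along each ray \<open>t \<mapsto> \<phi> (t u)\<close> the function starts above \<open>\<mu>\<close> at \<open>t = 1\<close> and eventually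
  drops below it. By Clarke's max formula \<open>\<phi>\<degree>(v; v) = max {\<langle>\<xi>, v\<rangle> | \<xi> \<in> \<partial>\<phi>(v)}\<close>,
  hypothesis (b) gives \<open>\<phi>\<degree>(v; v) < 0\<close> on the level set, so \<open>\<phi>\<close> strictly decreases along
  the ray through every point of the level set: each crossing of the level \<open>\<mu>\<close> is strict and
  downward. Hence there is exactly one crossing \<open>\<tau> u\<close>; and because the sign pattern
  \<open>\<phi> (a u) > \<mu> > \<phi> (b u)\<close> for \<open>a < \<tau> u < b\<close> persists for nearby \<open>u\<close>, \<open>\<tau>\<close> is continuous.
  The max formula rests on the algebraic Hahn--Banach theorem (Zorn's lemma applied to graphs
  of partial linear functionals dominated by a sublinear one).
\<close>

section \<open>Algebraic Hahn--Banach theorem\<close>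

text \<open>Graphs of partial linear functionals dominated by \<open>p\<close>, encoded as subspaces of \<open>X \<times> \<real>\<close>.\<close>
definition dominated_subspace :: "('a::real_vector \<Rightarrow> real) \<Rightarrow> ('a \<times> real) set \<Rightarrow> bool" where
  "dominated_subspace p G \<longleftrightarrow> subspace G \<and> (\<forall>(x, a)\<in>G. a \<le> p x)"

lemma dominated_subspace_Union_chain:
  assumes "C \<noteq> {}" and dom: "\<And>G. G \<in> C \<Longrightarrow> dominated_subspace p G"
    and chain: "\<And>G H. G \<in> C \<Longrightarrow> H \<in> C \<Longrightarrow> G \<subseteq> H \<or> H \<subseteq> G"
  shows "dominated_subspace p (\<Union>C)"
proof -
  have sub: "subspace G" if "G \<in> C" for G
    using dom[OF that] by (simp add: dominated_subspace_def)
  have "0 \<in> \<Union>C"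
    using assms(1) sub subspace_0 by blast
  moreover have "g + h \<in> \<Union>C" if g: "g \<in> \<Union>C" and h: "h \<in> \<Union>C" for g h
  proof -
    obtain G where "G \<in> C" "g \<in> G" "h \<in> G" using g h chain by blast
    then show ?thesis using sub subspace_add by blast
  qed
  moreover have "c *\<^sub>R g \<in> \<Union>C" if "g \<in> \<Union>C" for c g
    using that sub subspace_scale by blast
  moreover have "\<forall>(x, a)\<in>\<Union>C. a \<le> p x"
    using dom by (fastforce simp: dominated_subspace_def)
  ultimately show ?thesis
    by (simp add: dominated_subspace_def subspace_def)
qed

context
  fixes p :: "'a::real_vector \<Rightarrow> real"
  assumes subadditive: "\<And>x y. p (x + y) \<le> p x + p y"
    and pos_homogeneous: "\<And>c x. 0 \<le> c \<Longrightarrow> p (c *\<^sub>R x) = c * p x"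
begin

lemma sublinear_zero: "p 0 = 0"
  using pos_homogeneous[of 0 0] by simp

lemma dominated_subspace_span_diagonal: "dominated_subspace p (span {(v, p v)})"
proof -
  have "k * p v \<le> p (k *\<^sub>R v)" for k
  proof (cases "k \<ge> 0")
    case True then show ?thesis by (simp add: pos_homogeneous)
  next
    case False
    have "0 \<le> p v + p (- v)" using subadditive[of v "- v"] sublinear_zero by simp
    then show ?thesis
      using False pos_homogeneous[of "- k" "- v"] mult_left_mono[of "- p v" "p (- v)" "- k"]
      by (simp add: algebra_simps)
  qed
  then have "\<forall>(x, a)\<in>span {(v, p v)}. a \<le> p x"
    by (auto simp: span_singleton)
  then show ?thesis
    by (simp add: dominated_subspace_def)
qed

lemma dominated_subspace_extend:
  assumes "dominated_subspace p G"
  obtains c where "dominated_subspace p {g + h | g h. g \<in> G \<and> h \<in> span {(y, c)}}"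
proof -
  have G: "subspace G" and dom: "\<And>x a. (x, a) \<in> G \<Longrightarrow> a \<le> p x"
    using assms by (auto simp: dominated_subspace_def)
  have sep: "a - p (m - y) \<le> p (m' + y) - b" if "(m, a) \<in> G" "(m', b) \<in> G" for m a m' b
  proof -
    have "a + b \<le> p (m + m')" using dom subspace_add[OF G that] by simp
    also have "\<dots> \<le> p (m - y) + p (m' + y)" using subadditive[of "m - y" "m' + y"] by simp
    finally show ?thesis by simp
  qed
  \<comment> \<open>Any \<open>c\<close> between the two sides of \<open>sep\<close> extends the functional to \<open>y\<close>.\<close>
  define c where "c = (SUP (m, a)\<in>G. a - p (m - y))"
  have bdd: "bdd_above ((\<lambda>(m, a). a - p (m - y)) ` G)"
    using sep[OF _ subspace_0[OF G, unfolded zero_prod_def]] by (auto intro!: bdd_aboveI2)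
  have c_ge: "a - p (m - y) \<le> c" if "(m, a) \<in> G" for m a
    unfolding c_def using cSUP_upper[OF that bdd] by simp
  have c_le: "c \<le> p (m + y) - b" if "(m, b) \<in> G" for m b
    unfolding c_def using subspace_0[OF G] sep[OF _ that]
    by (intro cSUP_least) (auto simp: zero_prod_def)
  have "t * c + a \<le> p (m + t *\<^sub>R y)" if "(m, a) \<in> G" for m a t
  proof (cases t "0::real" rule: linorder_cases)
    case greater
    have "c \<le> p ((1/t) *\<^sub>R m + y) - (1/t) * a"
      using c_le subspace_scale[OF G that, of "1/t"] by simp
    then have "t * c + a \<le> t * p ((1/t) *\<^sub>R m + y)"
      using greater by (simp add: field_simps)
    also have "\<dots> = p (m + t *\<^sub>R y)"
      using greater by (simp add: pos_homogeneous[symmetric] scaleR_add_right)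
    finally show ?thesis .
  next
    case less
    have "(- 1/t) * a - p ((- 1/t) *\<^sub>R m - y) \<le> c"
      using c_ge subspace_scale[OF G that, of "- 1/t"] by simp
    then have "t * c + a \<le> (- t) * p ((- 1/t) *\<^sub>R m - y)"
      using less by (simp add: field_simps)
    also have "\<dots> = p ((- t) *\<^sub>R ((- 1/t) *\<^sub>R m - y))"
      by (rule pos_homogeneous[symmetric]) (use less in simp)
    also have "(- t) *\<^sub>R ((- 1/t) *\<^sub>R m - y) = m + t *\<^sub>R y"
      using less by (simp add: scaleR_diff_right)
    finally show ?thesis .
  qed (use dom that in simp)
  then have "dominated_subspace p {g + h | g h. g \<in> G \<and> h \<in> span {(y, c)}}"
    unfolding dominated_subspace_def span_singleton
    using subspace_sums[OF G subspace_span[of "{(y, c)}"]]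
    by (auto simp: span_singleton add.commute)
  then show thesis by (rule that)
qed

lemma dominated_subspace_maximal_exists:
  obtains M where "dominated_subspace p M" and "span {(v, p v)} \<subseteq> M"
    and "\<And>G. dominated_subspace p G \<Longrightarrow> M \<subseteq> G \<Longrightarrow> G = M"
proof -
  define A where "A = {G. dominated_subspace p G \<and> span {(v, p v)} \<subseteq> G}"
  have "\<exists>M\<in>A. \<forall>G\<in>A. M \<subseteq> G \<longrightarrow> G = M"
  proof (rule Zorn_Lemma2, intro ballI)
    fix C assume "C \<in> chains A"
    then have C: "C \<subseteq> A" "\<And>G H. G \<in> C \<Longrightarrow> H \<in> C \<Longrightarrow> G \<subseteq> H \<or> H \<subseteq> G"
      by (auto simp: chains_def chain_subset_def)
    show "\<exists>U\<in>A. \<forall>G\<in>C. G \<subseteq> U"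
    proof (cases "C = {}")
      case True
      then show ?thesis using dominated_subspace_span_diagonal by (auto simp: A_def)
    next
      case False
      then have "\<Union>C \<in> A"
        using dominated_subspace_Union_chain[of C p] C by (auto simp: A_def)
      then show ?thesis by blast
    qed
  qed
  then obtain M where "M \<in> A" and maximal: "\<And>G. G \<in> A \<Longrightarrow> M \<subseteq> G \<Longrightarrow> G = M"
    by blast
  show thesis
  proof (rule that)
    show "dominated_subspace p M" "span {(v, p v)} \<subseteq> M"
      using \<open>M \<in> A\<close> by (simp_all add: A_def)
    show "G = M" if "dominated_subspace p G" "M \<subseteq> G" for G
      using maximal[of G] that \<open>M \<in> A\<close> by (auto simp: A_def)
  qed
qed

lemma dominated_subspace_total_extension:
  obtains M where "dominated_subspace p M" and "span {(v, p v)} \<subseteq> M" and "\<forall>y. \<exists>a. (y, a) \<in> M"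
proof -
  obtain M where M: "dominated_subspace p M" "span {(v, p v)} \<subseteq> M"
    and maximal: "\<And>G. dominated_subspace p G \<Longrightarrow> M \<subseteq> G \<Longrightarrow> G = M"
    using dominated_subspace_maximal_exists[of v] by blast
  then have "subspace M"
    by (simp add: dominated_subspace_def)
  have "\<exists>a. (y, a) \<in> M" for y
  proof -
    obtain c where c: "dominated_subspace p {g + h | g h. g \<in> M \<and> h \<in> span {(y, c)}}"
      using dominated_subspace_extend[OF M(1)] by blast
    define E where "E = {g + h | g h. g \<in> M \<and> h \<in> span {(y, c)}}"
    have "M \<subseteq> E"
      unfolding E_def using span_zero[of "{(y, c)}"]
      by (metis (mono_tags, lifting) add.right_neutral mem_Collect_eq subsetI)
    with c have "E = M"
      unfolding E_def by (rule maximal)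
    moreover have "(y, c) \<in> E"
      unfolding E_def using subspace_0[OF \<open>subspace M\<close>] span_base[of "(y, c)" "{(y, c)}"]
      by (metis (mono_tags, lifting) add_0 insertI1 mem_Collect_eq)
    ultimately show ?thesis by blast
  qed
  then show thesis
    using that M by blast
qed

lemma sublinear_dominated_linear_exists:
  "\<exists>f. linear f \<and> (\<forall>x. f x \<le> p x) \<and> f v = p v"
proof -
  obtain M where "dominated_subspace p M" and "span {(v, p v)} \<subseteq> M"
    and total: "\<forall>y. \<exists>a. (y, a) \<in> M"
    by (rule dominated_subspace_total_extension)
  then have M: "subspace M" and dom: "\<And>x a. (x, a) \<in> M \<Longrightarrow> a \<le> p x"
    and diag: "(v, p v) \<in> M"
    by (auto simp: dominated_subspace_def intro: span_base)
  have unique: "a = b" if "(x, a) \<in> M" "(x, b) \<in> M" for x a b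
    using dom[of 0 "a - b"] dom[of 0 "b - a"] subspace_diff[OF M that] subspace_diff[OF M that(2,1)]
    by (simp add: sublinear_zero)
  define f where "f x = (SOME a. (x, a) \<in> M)" for x
  have graph: "(x, f x) \<in> M" for x
    unfolding f_def using total by (metis someI_ex)
  have f_eq: "(x, a) \<in> M \<Longrightarrow> f x = a" for x a
    using unique graph by blast
  have "linear f"
    by (rule linearI; rule f_eq)
      (use subspace_add[OF M graph graph] subspace_scale[OF M graph] in auto)
  then show ?thesis
    using graph dom f_eq[OF diag] by blast
qed

end

section \<open>The Clarke directional derivative of a locally Lipschitz function\<close>

lemma eventually_clarke_filter:
  fixes u :: "'a::metric_space"
  shows "eventually P (at (u, 0) within UNIV \<times> {0<..}) \<longleftrightarrow>
    (\<exists>d>0. \<forall>x t. dist x u < d \<longrightarrow> 0 < t \<longrightarrow> t < d \<longrightarrow> P (x, t))"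
proof
  assume "eventually P (at (u, 0) within UNIV \<times> {0<..})"
  then obtain d where "d > 0" and d: "\<And>z. z \<in> UNIV \<times> {0<..} \<Longrightarrow> z \<noteq> (u, 0) \<Longrightarrow> dist z (u, 0) < d \<Longrightarrow> P z"
    by (auto simp: eventually_at)
  have "P (x, t)" if "dist x u < d/2" "0 < t" "t < d/2" for x t
  proof (rule d)
    have "dist (x, t) (u, 0) \<le> dist x u + dist t 0"
      unfolding dist_Pair_Pair by (rule sqrt_sum_squares_le_sum) auto
    then show "dist (x, t) (u, 0) < d"
      using that by (simp add: dist_real_def)
  qed (use that in auto)
  with \<open>d > 0\<close> show "\<exists>d>0. \<forall>x t. dist x u < d \<longrightarrow> 0 < t \<longrightarrow> t < d \<longrightarrow> P (x, t)"
    by (intro exI[of _ "d/2"]) auto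
next
  assume "\<exists>d>0. \<forall>x t. dist x u < d \<longrightarrow> 0 < t \<longrightarrow> t < d \<longrightarrow> P (x, t)"
  then obtain d where "d > 0" and d: "\<And>x t. dist x u < d \<Longrightarrow> 0 < t \<Longrightarrow> t < d \<Longrightarrow> P (x, t)"
    by blast
  have "P (x, t)" if "t > 0" "dist (x, t) (u, 0) < d" for x t
    using d that dist_fst_le[of "(x, t)" "(u, 0)"] dist_snd_le[of "(x, t)" "(u, 0)"]
    by (simp add: dist_real_def)
  with \<open>d > 0\<close> show "eventually P (at (u, 0) within UNIV \<times> {0<..})"
    by (auto simp: eventually_at)
qed

lemma clarke_filter_nontrivial:
  "at (u::'a::metric_space, 0::real) within UNIV \<times> {0<..} \<noteq> bot"
  unfolding trivial_limit_def eventually_clarke_filter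
  by (auto intro: exI[of _ u] exI[of _ "d/2" for d])

lemma clarke_dd_le:
  assumes "d > 0" "\<And>x t. dist x u < d \<Longrightarrow> 0 < t \<Longrightarrow> t < d \<Longrightarrow> (\<phi> (x + t *\<^sub>R w) - \<phi> x) / t \<le> c"
  shows "clarke_dd \<phi> u w \<le> ereal c"
  unfolding clarke_dd_def
  by (rule Limsup_bounded) (use assms in \<open>auto simp: eventually_clarke_filter\<close>)

lemma clarke_dd_ge:
  assumes "d > 0" "\<And>x t. dist x u < d \<Longrightarrow> 0 < t \<Longrightarrow> t < d \<Longrightarrow> c \<le> (\<phi> (x + t *\<^sub>R w) - \<phi> x) / t"
  shows "ereal c \<le> clarke_dd \<phi> u w"
  unfolding clarke_dd_def
  by (rule le_Limsup[OF clarke_filter_nontrivial]) (use assms in \<open>auto simp: eventually_clarke_filter\<close>)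

lemma clarke_dd_lessD:
  assumes "clarke_dd \<phi> u w < ereal c"
  shows "\<exists>d>0. \<forall>x t. dist x u < d \<longrightarrow> 0 < t \<longrightarrow> t < d \<longrightarrow> (\<phi> (x + t *\<^sub>R w) - \<phi> x) / t < c"
  using Limsup_lessD[OF assms[unfolded clarke_dd_def]] by (simp add: eventually_clarke_filter)

text \<open>\<open>real_of_ereal\<close> sends \<open>\<plusminus>\<infinity>\<close> to \<open>0\<close>, but near a Lipschitz point \<open>clarke_dd\<close> is finite.\<close>
definition clarke_dd_real :: "('a::real_normed_vector \<Rightarrow> real) \<Rightarrow> 'a \<Rightarrow> 'a \<Rightarrow> real" where
  "clarke_dd_real \<phi> u w = real_of_ereal (clarke_dd \<phi> u w)"

context
  fixes \<phi> :: "'a::real_normed_vector \<Rightarrow> real" and u :: 'a and r L :: real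
  assumes r: "r > 0"
    and lipschitz: "\<forall>x\<in>ball u r. \<forall>y\<in>ball u r. \<bar>\<phi> x - \<phi> y\<bar> \<le> L * dist x y"
begin

lemma clarke_quotient_bounded:
  obtains d where "d > 0"
    and "\<And>x t. dist x u < d \<Longrightarrow> 0 < t \<Longrightarrow> t < d \<Longrightarrow> \<bar>(\<phi> (x + t *\<^sub>R w) - \<phi> x) / t\<bar> \<le> L * norm w"
proof
  define d where "d = r / (2 * (norm w + 1))"
  have "norm w + 1 > 0" by (simp add: add_nonneg_pos)
  then show "d > 0" using r by (simp add: d_def)
  fix x t assume x: "dist x u < d" and t: "0 < t" "t < d"
  have "d \<le> r / 2"
    unfolding d_def using r \<open>norm w + 1 > 0\<close> by (intro divide_left_mono) auto
  then have "x \<in> ball u r" using x r by (simp add: dist_commute)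
  have "t * norm w \<le> d * (norm w + 1)" using t by (intro mult_mono) auto
  also have "\<dots> = r / 2" using \<open>norm w + 1 > 0\<close> by (simp add: d_def field_simps)
  finally have "dist u (x + t *\<^sub>R w) < r"
    using dist_triangle[of u "x + t *\<^sub>R w" x] x \<open>d \<le> r / 2\<close> t by (simp add: dist_norm norm_minus_commute)
  then have "x + t *\<^sub>R w \<in> ball u r" by simp
  then have "\<bar>\<phi> (x + t *\<^sub>R w) - \<phi> x\<bar> \<le> L * dist (x + t *\<^sub>R w) x"
    using lipschitz \<open>x \<in> ball u r\<close> by blast
  also have "dist (x + t *\<^sub>R w) x = t * norm w"
    using t by (simp add: dist_norm)
  finally have "\<bar>\<phi> (x + t *\<^sub>R w) - \<phi> x\<bar> \<le> L * (t * norm w)" .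
  then show "\<bar>(\<phi> (x + t *\<^sub>R w) - \<phi> x) / t\<bar> \<le> L * norm w"
    using t by (simp add: abs_div divide_le_eq mult_ac)
qed

lemma clarke_dd_finite: "clarke_dd \<phi> u w = ereal (clarke_dd_real \<phi> u w)"
  and clarke_dd_real_bound: "\<bar>clarke_dd_real \<phi> u w\<bar> \<le> L * norm w"
proof -
  obtain d where d: "d > 0"
    and bound: "\<And>x t. dist x u < d \<Longrightarrow> 0 < t \<Longrightarrow> t < d \<Longrightarrow> \<bar>(\<phi> (x + t *\<^sub>R w) - \<phi> x) / t\<bar> \<le> L * norm w"
    using clarke_quotient_bounded by blast
  have "clarke_dd \<phi> u w \<le> ereal (L * norm w)"
    by (rule clarke_dd_le[OF d]) (use bound abs_le_D1 in blast)
  moreover have "ereal (- (L * norm w)) \<le> clarke_dd \<phi> u w"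
    by (rule clarke_dd_ge[OF d]) (use bound abs_le_D2 minus_le_iff in metis)
  ultimately show "clarke_dd \<phi> u w = ereal (clarke_dd_real \<phi> u w)"
    and "\<bar>clarke_dd_real \<phi> u w\<bar> \<le> L * norm w"
    unfolding clarke_dd_real_def by (cases "clarke_dd \<phi> u w"; simp)+
qed

lemma clarke_dd_real_le:
  assumes "d > 0" "\<And>x t. dist x u < d \<Longrightarrow> 0 < t \<Longrightarrow> t < d \<Longrightarrow> (\<phi> (x + t *\<^sub>R w) - \<phi> x) / t \<le> c"
  shows "clarke_dd_real \<phi> u w \<le> c"
  using clarke_dd_le[where u=u and \<phi>=\<phi>, OF assms] clarke_dd_finite[of w] by simp

lemma clarke_dd_real_lessD:
  assumes "clarke_dd_real \<phi> u w < c"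
  obtains d where "d > 0"
    and "\<And>x t. dist x u < d \<Longrightarrow> 0 < t \<Longrightarrow> t < d \<Longrightarrow> (\<phi> (x + t *\<^sub>R w) - \<phi> x) / t < c"
  using clarke_dd_lessD[of \<phi> u w c] assms clarke_dd_finite[of w] by auto

lemma clarke_dd_real_scale_le:
  assumes c: "c > 0"
  shows "clarke_dd_real \<phi> u (c *\<^sub>R w) \<le> c * clarke_dd_real \<phi> u w"
proof (rule field_le_epsilon)
  fix e :: real assume "e > 0"
  then obtain d where d: "d > 0" and quotient:
    "\<And>x t. dist x u < d \<Longrightarrow> 0 < t \<Longrightarrow> t < d \<Longrightarrow> (\<phi> (x + t *\<^sub>R w) - \<phi> x) / t < clarke_dd_real \<phi> u w + e / c"
    using clarke_dd_real_lessD[of w] c by (metis divide_pos_pos less_add_same_cancel1)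
  show "clarke_dd_real \<phi> u (c *\<^sub>R w) \<le> c * clarke_dd_real \<phi> u w + e"
  proof (rule clarke_dd_real_le[of "min d (d / c)"])
    show "min d (d / c) > 0" using d c by simp
    fix x t assume "dist x u < min d (d / c)" "0 < t" "t < min d (d / c)"
    then have "(\<phi> (x + (c * t) *\<^sub>R w) - \<phi> x) / (c * t) < clarke_dd_real \<phi> u w + e / c"
      using c d by (intro quotient) (auto simp: field_simps)
    then have "c * ((\<phi> (x + (c * t) *\<^sub>R w) - \<phi> x) / (c * t)) < c * (clarke_dd_real \<phi> u w + e / c)"
      using c by (rule mult_strict_left_mono)
    then show "(\<phi> (x + t *\<^sub>R c *\<^sub>R w) - \<phi> x) / t \<le> c * clarke_dd_real \<phi> u w + e"
      using c by (simp add: distrib_left mult.commute)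
  qed
qed

lemma clarke_dd_real_pos_homogeneous:
  assumes "c \<ge> 0"
  shows "clarke_dd_real \<phi> u (c *\<^sub>R w) = c * clarke_dd_real \<phi> u w"
proof (cases "c = 0")
  case True
  then show ?thesis using clarke_dd_real_bound[of 0] by simp
next
  case False
  with assms have c: "c > 0" by simp
  have "clarke_dd_real \<phi> u w = clarke_dd_real \<phi> u ((1/c) *\<^sub>R (c *\<^sub>R w))"
    using c by simp
  also have "\<dots> \<le> (1/c) * clarke_dd_real \<phi> u (c *\<^sub>R w)"
    using c by (intro clarke_dd_real_scale_le) simp
  finally show ?thesis
    using clarke_dd_real_scale_le[OF c, of w] c by (simp add: field_simps)
qed

lemma clarke_dd_real_subadditive:
  "clarke_dd_real \<phi> u (w1 + w2) \<le> clarke_dd_real \<phi> u w1 + clarke_dd_real \<phi> u w2"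
proof (rule field_le_epsilon)
  fix e :: real assume "e > 0"
  obtain d1 where "d1 > 0" and quotient1:
    "\<And>x t. dist x u < d1 \<Longrightarrow> 0 < t \<Longrightarrow> t < d1 \<Longrightarrow> (\<phi> (x + t *\<^sub>R w1) - \<phi> x) / t < clarke_dd_real \<phi> u w1 + e / 2"
    using clarke_dd_real_lessD[of w1] \<open>e > 0\<close> by (metis half_gt_zero less_add_same_cancel1)
  obtain d2 where "d2 > 0" and quotient2:
    "\<And>x t. dist x u < d2 \<Longrightarrow> 0 < t \<Longrightarrow> t < d2 \<Longrightarrow> (\<phi> (x + t *\<^sub>R w2) - \<phi> x) / t < clarke_dd_real \<phi> u w2 + e / 2"
    using clarke_dd_real_lessD[of w2] \<open>e > 0\<close> by (metis half_gt_zero less_add_same_cancel1)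
  define d where "d = min d1 (d2 / (2 * (norm w1 + 1)))"
  have "norm w1 + 1 > 0" by (simp add: add_nonneg_pos)
  then have "d > 0" using \<open>d1 > 0\<close> \<open>d2 > 0\<close> by (simp add: d_def)
  show "clarke_dd_real \<phi> u (w1 + w2) \<le> clarke_dd_real \<phi> u w1 + clarke_dd_real \<phi> u w2 + e"
  proof (rule clarke_dd_real_le[OF \<open>d > 0\<close>])
    fix x t assume x: "dist x u < d" and t: "0 < t" "t < d"
    have "d2 / (2 * (norm w1 + 1)) \<le> d2 / 2"
      using \<open>d2 > 0\<close> \<open>norm w1 + 1 > 0\<close> by (intro divide_left_mono) auto
    then have "d \<le> d2 / 2" unfolding d_def by (rule min.coboundedI2)
    have "t * norm w1 \<le> d * (norm w1 + 1)" using t by (intro mult_mono) auto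
    also have "\<dots> \<le> d2 / (2 * (norm w1 + 1)) * (norm w1 + 1)"
      using \<open>norm w1 + 1 > 0\<close> by (intro mult_right_mono) (auto simp: d_def)
    also have "\<dots> = d2 / 2"
      using \<open>norm w1 + 1 > 0\<close> by (simp add: field_simps)
    finally have "dist (x + t *\<^sub>R w1) u < d2"
      using dist_triangle[of "x + t *\<^sub>R w1" u x] x \<open>d \<le> d2 / 2\<close> t by (simp add: dist_norm)
    then have "(\<phi> ((x + t *\<^sub>R w1) + t *\<^sub>R w2) - \<phi> (x + t *\<^sub>R w1)) / t < clarke_dd_real \<phi> u w2 + e / 2"
      using t \<open>d \<le> d2 / 2\<close> by (intro quotient2) auto
    moreover have "(\<phi> (x + t *\<^sub>R w1) - \<phi> x) / t < clarke_dd_real \<phi> u w1 + e / 2"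
      using x t by (intro quotient1) (auto simp: d_def)
    ultimately show "(\<phi> (x + t *\<^sub>R (w1 + w2)) - \<phi> x) / t \<le> clarke_dd_real \<phi> u w1 + clarke_dd_real \<phi> u w2 + e"
      by (simp add: scaleR_add_right add.assoc diff_divide_distrib)
  qed
qed

end

lemma locally_lipschitz_continuous:
  assumes "locally_lipschitz \<phi>"
  shows "continuous_on UNIV \<phi>"
proof -
  have "isCont \<phi> u" for u
  proof -
    obtain r L where "r > 0" and L: "\<forall>x\<in>ball u r. \<forall>y\<in>ball u r. \<bar>\<phi> x - \<phi> y\<bar> \<le> L * dist x y"
      using assms unfolding locally_lipschitz_def by blast
    have "(max L 0)-lipschitz_on (ball u r) \<phi>"
      unfolding lipschitz_on_def dist_real_def
      using L by (force intro: order_trans[OF _ mult_right_mono])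
    then have "continuous_on (ball u r) \<phi>"
      by (rule lipschitz_on_continuous_on)
    then show ?thesis
      using \<open>r > 0\<close> by (simp add: continuous_on_eq_continuous_at)
  qed
  then show ?thesis
    by (simp add: continuous_at_imp_continuous_on)
qed

text \<open>Clarke's max formula; Hahn--Banach supplies the maximising subgradient.\<close>
lemma clarke_subdiff_attains_clarke_dd:
  fixes \<phi> :: "'a::real_normed_vector \<Rightarrow> real"
  assumes "locally_lipschitz \<phi>"
  obtains \<xi> where "\<xi> \<in> clarke_subdiff \<phi> u" and "ereal (blinfun_apply \<xi> w) = clarke_dd \<phi> u w"
proof -
  obtain r L where r: "r > 0"
    and lipschitz: "\<forall>x\<in>ball u r. \<forall>y\<in>ball u r. \<bar>\<phi> x - \<phi> y\<bar> \<le> L * dist x y"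
    using assms unfolding locally_lipschitz_def by blast
  note sublinear = clarke_dd_real_subadditive[OF r lipschitz]
    clarke_dd_real_pos_homogeneous[OF r lipschitz]
  obtain f where "linear f" and f_le: "\<And>x. f x \<le> clarke_dd_real \<phi> u x"
    and f_w: "f w = clarke_dd_real \<phi> u w"
    using sublinear_dominated_linear_exists[of "clarke_dd_real \<phi> u" w] sublinear by blast
  have "\<bar>f x\<bar> \<le> L * norm x" for x
    using f_le[of x] f_le[of "- x"] linear_neg[OF \<open>linear f\<close>, of x]
      clarke_dd_real_bound[OF r lipschitz, where w = x] clarke_dd_real_bound[OF r lipschitz, where w = "- x"]
    by auto
  then have "bounded_linear f"
    using \<open>linear f\<close> by (intro bounded_linear_intro[where K = L]) (auto simp: linear_add linear_scale mult.commute)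
  then have "Blinfun f \<in> clarke_subdiff \<phi> u"
    using f_le by (simp add: clarke_subdiff_def bounded_linear_Blinfun_apply clarke_dd_finite[OF r lipschitz])
  moreover have "ereal (blinfun_apply (Blinfun f) w) = clarke_dd \<phi> u w"
    using \<open>bounded_linear f\<close> f_w by (simp add: bounded_linear_Blinfun_apply clarke_dd_finite[OF r lipschitz])
  ultimately show thesis
    by (rule that)
qed

lemma clarke_descent_direction:
  fixes \<phi> :: "'a::real_normed_vector \<Rightarrow> real"
  assumes "locally_lipschitz \<phi>" and "\<forall>\<xi>\<in>clarke_subdiff \<phi> v. blinfun_apply \<xi> v < 0"
  obtains d where "d > 0" and "\<And>x t. dist x v < d \<Longrightarrow> 0 < t \<Longrightarrow> t < d \<Longrightarrow> \<phi> (x + t *\<^sub>R v) < \<phi> x"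
proof -
  obtain \<xi> where "\<xi> \<in> clarke_subdiff \<phi> v" and \<xi>: "ereal (blinfun_apply \<xi> v) = clarke_dd \<phi> v v"
    using clarke_subdiff_attains_clarke_dd[OF assms(1)] .
  with assms(2) have "clarke_dd \<phi> v v < ereal 0"
    by (simp flip: \<xi>)
  then obtain d where "d > 0"
    and "\<And>x t. dist x v < d \<Longrightarrow> 0 < t \<Longrightarrow> t < d \<Longrightarrow> (\<phi> (x + t *\<^sub>R v) - \<phi> x) / t < 0"
    using clarke_dd_lessD by blast
  then show thesis
    using that by (simp add: divide_less_0_iff)
qed

lemma clarke_descent_along_ray:
  fixes \<phi> :: "'a::real_normed_vector \<Rightarrow> real"
  assumes "locally_lipschitz \<phi>" and "\<forall>\<xi>\<in>clarke_subdiff \<phi> v. blinfun_apply \<xi> v < 0"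
  obtains \<delta> where "\<delta> > 0"
    and "\<And>r s. 1 - \<delta> < r \<Longrightarrow> r < s \<Longrightarrow> s < 1 + \<delta> \<Longrightarrow> \<phi> (s *\<^sub>R v) < \<phi> (r *\<^sub>R v)"
proof -
  obtain d where "d > 0" and descent: "\<And>x t. dist x v < d \<Longrightarrow> 0 < t \<Longrightarrow> t < d \<Longrightarrow> \<phi> (x + t *\<^sub>R v) < \<phi> x"
    using clarke_descent_direction[OF assms] by blast
  define \<delta> where "\<delta> = d / 2 / (norm v + 1)"
  have "norm v + 1 > 0" by (simp add: add_nonneg_pos)
  have "\<delta> > 0" using \<open>d > 0\<close> \<open>norm v + 1 > 0\<close> by (simp add: \<delta>_def)
  have "\<delta> \<le> d / 2"
    unfolding \<delta>_def using frac_le[of "d / 2" "d / 2" 1 "norm v + 1"] \<open>d > 0\<close> by simp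
  have "\<delta> * norm v \<le> \<delta> * (norm v + 1)" using \<open>\<delta> > 0\<close> by simp
  also have "\<dots> = d / 2" using \<open>norm v + 1 > 0\<close> by (simp add: \<delta>_def del: divide_divide_eq_left)
  finally have "\<delta> * norm v \<le> d / 2" .
  have "\<phi> (s *\<^sub>R v) < \<phi> (r *\<^sub>R v)" if "1 - \<delta> < r" "r < s" "s < 1 + \<delta>" for r s
  proof -
    have "dist (r *\<^sub>R v) v = \<bar>r - 1\<bar> * norm v"
      using norm_scaleR[of "r - 1" v] by (simp add: dist_norm scaleR_diff_left)
    also have "\<dots> \<le> \<delta> * norm v"
      using that by (intro mult_right_mono) auto
    finally have "dist (r *\<^sub>R v) v < d"
      using \<open>\<delta> * norm v \<le> d / 2\<close> \<open>d > 0\<close> by linarith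
    then have "\<phi> (r *\<^sub>R v + (s - r) *\<^sub>R v) < \<phi> (r *\<^sub>R v)"
      using that \<open>\<delta> \<le> d / 2\<close> by (intro descent) auto
    then show ?thesis
      by (simp flip: scaleR_add_left)
  qed
  with \<open>\<delta> > 0\<close> show thesis
    using that by blast
qed

lemma clarke_strict_crossing_on_ray:
  fixes \<phi> :: "'a::real_normed_vector \<Rightarrow> real"
  assumes "locally_lipschitz \<phi>" and "\<forall>\<xi>\<in>clarke_subdiff \<phi> (s *\<^sub>R u). blinfun_apply \<xi> (s *\<^sub>R u) < 0"
    and "s > 0"
  shows "\<exists>\<eta>>0. \<forall>t. (s - \<eta> < t \<and> t < s \<longrightarrow> \<phi> (t *\<^sub>R u) > \<phi> (s *\<^sub>R u)) \<and>
                   (s < t \<and> t < s + \<eta> \<longrightarrow> \<phi> (t *\<^sub>R u) < \<phi> (s *\<^sub>R u))"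
proof -
  obtain \<delta> where "\<delta> > 0"
    and descent: "\<And>r r'. 1 - \<delta> < r \<Longrightarrow> r < r' \<Longrightarrow> r' < 1 + \<delta> \<Longrightarrow> \<phi> (r' *\<^sub>R s *\<^sub>R u) < \<phi> (r *\<^sub>R s *\<^sub>R u)"
    using clarke_descent_along_ray[OF assms(1,2)] by blast
  have "\<phi> (t *\<^sub>R u) > \<phi> (s *\<^sub>R u)" if "s - s * \<delta> < t" "t < s" for t
  proof -
    have "1 - \<delta> < t / s" "t / s < 1"
      using that \<open>s > 0\<close> by (simp_all add: field_simps)
    then have "\<phi> (1 *\<^sub>R s *\<^sub>R u) < \<phi> ((t / s) *\<^sub>R s *\<^sub>R u)"
      using \<open>\<delta> > 0\<close> by (intro descent) auto
    then show ?thesis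
      using \<open>s > 0\<close> by simp
  qed
  moreover have "\<phi> (t *\<^sub>R u) < \<phi> (s *\<^sub>R u)" if "s < t" "t < s + s * \<delta>" for t
  proof -
    have "1 < t / s" "t / s < 1 + \<delta>"
      using that \<open>s > 0\<close> by (simp_all add: field_simps)
    then have "\<phi> ((t / s) *\<^sub>R s *\<^sub>R u) < \<phi> (1 *\<^sub>R s *\<^sub>R u)"
      using \<open>\<delta> > 0\<close> by (intro descent) auto
    then show ?thesis
      using \<open>s > 0\<close> by simp
  qed
  ultimately show ?thesis
    using \<open>s > 0\<close> \<open>\<delta> > 0\<close> by (intro exI[of _ "s * \<delta>"]) auto
qed

section \<open>Crossing the level along rays\<close>

lemma first_level_point:
  fixes g :: "real \<Rightarrow> real"
  assumes "continuous_on {a..b} g" and "a \<le> b" and "g a < \<mu>" and "\<mu> \<le> g b"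
  obtains s where "a < s" "s \<le> b" "g s = \<mu>" "\<And>x. a \<le> x \<Longrightarrow> x < s \<Longrightarrow> g x < \<mu>"
proof -
  define Z where "Z = {x \<in> {a..b}. g x = \<mu>}"
  have "Z \<noteq> {}"
    using IVT'[of g a \<mu> b] assms by (auto simp: Z_def)
  moreover have "closed Z"
    unfolding Z_def using assms(1) by (rule continuous_closed_preimage_constant) simp
  moreover have "bdd_below Z"
    by (auto simp: Z_def intro: bdd_belowI[of _ a])
  ultimately have "Inf Z \<in> Z"
    using closed_contains_Inf by blast
  then have s: "a \<le> Inf Z" "Inf Z \<le> b" "g (Inf Z) = \<mu>"
    by (auto simp: Z_def)
  have "g x < \<mu>" if x: "a \<le> x" "x < Inf Z" for x
  proof (rule ccontr)
    assume "\<not> g x < \<mu>"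
    have "continuous_on {a..x} g"
      using continuous_on_subset[OF assms(1)] x s(2) by auto
    then obtain y where "a \<le> y" "y \<le> x" "g y = \<mu>"
      using IVT'[of g a \<mu> x] x(1) assms(3) \<open>\<not> g x < \<mu>\<close> by force
    then have "Inf Z \<le> y"
      using x s \<open>bdd_below Z\<close> by (intro cInf_lower) (auto simp: Z_def)
    with \<open>y \<le> x\<close> \<open>x < Inf Z\<close> show False by simp
  qed
  moreover have "a < Inf Z"
    using s assms(3) by (cases "a = Inf Z") auto
  ultimately show thesis
    using that s by blast
qed

lemma unique_level_crossing:
  fixes g :: "real \<Rightarrow> real"
  assumes cont: "continuous_on UNIV g" and "g 1 > \<mu>" and "T \<ge> 1" and "g T < \<mu>"
    and transversal: "\<And>s. s \<ge> 1 \<Longrightarrow> g s = \<mu> \<Longrightarrow>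
      \<exists>\<eta>>0. \<forall>t. (s - \<eta> < t \<and> t < s \<longrightarrow> g t > \<mu>) \<and> (s < t \<and> t < s + \<eta> \<longrightarrow> g t < \<mu>)"
  obtains \<tau> where "\<tau> > 1" "\<And>t. 1 \<le> t \<Longrightarrow> t < \<tau> \<Longrightarrow> g t > \<mu>" "g \<tau> = \<mu>" "\<And>t. \<tau> < t \<Longrightarrow> g t < \<mu>"
proof -
  have cont': "continuous_on {a..b} g" "continuous_on {a..b} (\<lambda>t. - g t)" for a b
    by (auto intro: continuous_on_subset[OF cont] continuous_on_minus)
  obtain \<tau> where \<tau>: "1 < \<tau>" "g \<tau> = \<mu>" and before: "\<And>t. 1 \<le> t \<Longrightarrow> t < \<tau> \<Longrightarrow> g t > \<mu>"
    using first_level_point[of 1 T "\<lambda>t. - g t" "- \<mu>", OF cont'(2)] assms(2-4) by auto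
  have "g t < \<mu>" if "\<tau> < t" for t
  proof (rule ccontr)
    assume "\<not> g t < \<mu>"
    obtain \<eta> where "\<eta> > 0" and \<eta>: "\<And>t. \<tau> < t \<Longrightarrow> t < \<tau> + \<eta> \<Longrightarrow> g t < \<mu>"
      using transversal[of \<tau>] \<tau> by auto
    define a where "a = \<tau> + \<eta> / 2"
    have "g a < \<mu>"
      using \<eta>[of a] \<open>\<eta> > 0\<close> by (simp add: a_def)
    have "\<tau> + \<eta> \<le> t"
      using \<eta>[of t] \<open>\<not> g t < \<mu>\<close> \<open>\<tau> < t\<close> by force
    then have "a < t"
      using \<open>\<eta> > 0\<close> by (simp add: a_def)
    \<comment> \<open>The first return of g to the level \<mu> after a would be an upward crossing.\<close>
    with \<open>g a < \<mu>\<close> obtain s where "a < s" "g s = \<mu>" and below: "\<And>x. a \<le> x \<Longrightarrow> x < s \<Longrightarrow> g x < \<mu>"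
      using first_level_point[of a t g \<mu>, OF cont'(1)] \<open>\<not> g t < \<mu>\<close> by auto
    moreover have "s \<ge> 1"
      using \<open>a < s\<close> \<tau> \<open>\<eta> > 0\<close> by (simp add: a_def)
    ultimately obtain \<eta>' where "\<eta>' > 0" and above: "\<And>x. s - \<eta>' < x \<Longrightarrow> x < s \<Longrightarrow> g x > \<mu>"
      using transversal by blast
    define x where "x = max a (s - \<eta>' / 2)"
    have "a \<le> x" "x < s" "s - \<eta>' < x"
      using \<open>\<eta>' > 0\<close> \<open>a < s\<close> by (auto simp: x_def)
    then show False
      using below above by fastforce
  qed
  with \<tau> before show thesis
    using that by blast
qed

definition level_crossing_time :: "('a::real_vector \<Rightarrow> real) \<Rightarrow> real \<Rightarrow> 'a \<Rightarrow> real \<Rightarrow> bool" where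
  "level_crossing_time \<phi> \<mu> u \<tau> \<longleftrightarrow> \<tau> > 1 \<and> (\<forall>t. 1 \<le> t \<longrightarrow> t < \<tau> \<longrightarrow> \<phi> (t *\<^sub>R u) > \<mu>) \<and>
     \<phi> (\<tau> *\<^sub>R u) = \<mu> \<and> (\<forall>t. \<tau> < t \<longrightarrow> \<phi> (t *\<^sub>R u) < \<mu>)"

lemma level_crossing_time_exists:
  fixes \<phi> :: "'a::real_normed_vector \<Rightarrow> real"
  assumes "locally_lipschitz \<phi>"
    and "\<forall>v. \<phi> v = \<mu> \<longrightarrow> (\<forall>\<xi>\<in>clarke_subdiff \<phi> v. blinfun_apply \<xi> v < 0)"
    and "\<phi> u > \<mu>" and "T \<ge> 1" and "\<phi> (T *\<^sub>R u) < \<mu>"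
  shows "\<exists>\<tau>. level_crossing_time \<phi> \<mu> u \<tau>"
proof -
  have "continuous_on UNIV (\<lambda>t. \<phi> (t *\<^sub>R u))"
    by (intro continuous_on_compose2[OF locally_lipschitz_continuous[OF assms(1)]] continuous_intros) auto
  moreover have "\<exists>\<eta>>0. \<forall>t. (s - \<eta> < t \<and> t < s \<longrightarrow> \<phi> (t *\<^sub>R u) > \<mu>) \<and> (s < t \<and> t < s + \<eta> \<longrightarrow> \<phi> (t *\<^sub>R u) < \<mu>)"
    if "s \<ge> 1" "\<phi> (s *\<^sub>R u) = \<mu>" for s
    using clarke_strict_crossing_on_ray[OF assms(1), of s u] assms(2) that by simp
  ultimately obtain \<tau> where "\<tau> > 1" "\<And>t. 1 \<le> t \<Longrightarrow> t < \<tau> \<Longrightarrow> \<phi> (t *\<^sub>R u) > \<mu>"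
    "\<phi> (\<tau> *\<^sub>R u) = \<mu>" "\<And>t. \<tau> < t \<Longrightarrow> \<phi> (t *\<^sub>R u) < \<mu>"
    using unique_level_crossing[of "\<lambda>t. \<phi> (t *\<^sub>R u)" \<mu> T] assms(3-5) by auto
  then show ?thesis
    unfolding level_crossing_time_def by blast
qed

lemma level_crossing_time_bounds:
  assumes "level_crossing_time \<phi> \<mu> u \<tau>"
    and "1 \<le> t"
  shows "\<phi> (t *\<^sub>R u) > \<mu> \<Longrightarrow> t < \<tau>" and "\<phi> (t *\<^sub>R u) < \<mu> \<Longrightarrow> \<tau> < t"
  using assms unfolding level_crossing_time_def by (cases t \<tau> rule: linorder_cases; auto)+

lemma continuous_on_level_crossing_time:
  fixes \<phi> :: "'a::real_normed_vector \<Rightarrow> real"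
  assumes cont: "continuous_on UNIV \<phi>" and crossing: "\<And>u. u \<in> S \<Longrightarrow> level_crossing_time \<phi> \<mu> u (\<tau> u)"
  shows "continuous_on S \<tau>"
  unfolding continuous_on_iff
proof (intro ballI allI impI)
  fix u0 and e :: real assume "u0 \<in> S" "e > 0"
  then have "\<tau> u0 > 1"
    using crossing by (simp add: level_crossing_time_def)
  define a where "a = \<tau> u0 - min (e / 2) ((\<tau> u0 - 1) / 2)"
  define b where "b = \<tau> u0 + e / 2"
  have "1 \<le> a" "a < \<tau> u0" "\<tau> u0 < b" "1 \<le> b" "\<tau> u0 - e < a" "b < \<tau> u0 + e"
    using \<open>e > 0\<close> \<open>\<tau> u0 > 1\<close> by (auto simp: a_def b_def min_def field_simps)
  define U where "U = {u. \<phi> (a *\<^sub>R u) > \<mu> \<and> \<phi> (b *\<^sub>R u) < \<mu>}"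
  have "open U"
    unfolding U_def
    by (intro open_Collect_conj open_Collect_less continuous_on_compose2[OF cont] continuous_intros) auto
  moreover have "u0 \<in> U"
    using crossing[OF \<open>u0 \<in> S\<close>] \<open>1 \<le> a\<close> \<open>a < \<tau> u0\<close> \<open>\<tau> u0 < b\<close>
    by (auto simp: U_def level_crossing_time_def)
  ultimately obtain d where "d > 0" and d: "ball u0 d \<subseteq> U"
    by (meson openE)
  have "a < \<tau> u" "\<tau> u < b" if "u \<in> S" "u \<in> U" for u
    using level_crossing_time_bounds[OF crossing[OF \<open>u \<in> S\<close>]] \<open>1 \<le> a\<close> \<open>1 \<le> b\<close> that(2)
    by (auto simp: U_def)
  then show "\<exists>d>0. \<forall>u\<in>S. dist u u0 < d \<longrightarrow> dist (\<tau> u) (\<tau> u0) < e"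
    using \<open>d > 0\<close> d \<open>\<tau> u0 - e < a\<close> \<open>b < \<tau> u0 + e\<close>
    by (intro exI[of _ d]) (force simp: dist_real_def dist_commute abs_less_iff)
qed

theorem lemma2p5:
  fixes \<phi> :: "'a::banach \<Rightarrow> real" and S :: "'a set" and \<mu> :: real
  assumes "reflexive_space TYPE('a)"
    and "S \<subseteq> sphere 0 1" and "S \<noteq> {}"
    and "locally_lipschitz \<phi>"
    and "ereal \<mu> < (INF u\<in>S. ereal (\<phi> u))"
    and "\<forall>u\<in>S. filterlim (\<lambda>t. \<phi> (t *\<^sub>R u)) at_bot at_top"
    and "\<forall>v. \<phi> v = \<mu> \<longrightarrow> (\<forall>v'\<in>clarke_subdiff \<phi> v. blinfun_apply v' v < 0)"
  shows "\<exists>\<tau> :: 'a \<Rightarrow> real. continuous_on S \<tau> \<and> (\<forall>u\<in>S. \<tau> u > 1) \<and>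
           (\<forall>u\<in>S. \<forall>t\<ge>1.
              (t < \<tau> u \<longrightarrow> \<phi> (t *\<^sub>R u) > \<mu>) \<and>
              (t = \<tau> u \<longrightarrow> \<phi> (t *\<^sub>R u) = \<mu>) \<and>
              (t > \<tau> u \<longrightarrow> \<phi> (t *\<^sub>R u) < \<mu>))"
proof -
  have "\<exists>\<tau>. level_crossing_time \<phi> \<mu> u \<tau>" if "u \<in> S" for u
  proof -
    have "\<phi> u > \<mu>"
      using order_less_le_trans[OF assms(5) INF_lower[OF that, of "\<lambda>u. ereal (\<phi> u)"]] by simp
    have "eventually (\<lambda>t. \<phi> (t *\<^sub>R u) \<le> \<mu> - 1) at_top"
      using assms(6) that by (simp add: filterlim_at_bot)
    then obtain T where T: "\<And>t. t \<ge> T \<Longrightarrow> \<phi> (t *\<^sub>R u) \<le> \<mu> - 1"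
      by (auto simp: eventually_at_top_linorder)
    show ?thesis
      using level_crossing_time_exists[OF assms(4,7) \<open>\<phi> u > \<mu>\<close>, of "max T 1"] T[of "max T 1"] by simp
  qed
  then obtain \<tau> where \<tau>: "\<And>u. u \<in> S \<Longrightarrow> level_crossing_time \<phi> \<mu> u (\<tau> u)"
    using bchoice[of S "level_crossing_time \<phi> \<mu>"] by blast
  have "continuous_on S \<tau>"
    using locally_lipschitz_continuous[OF assms(4)] \<tau> by (rule continuous_on_level_crossing_time)
  moreover have "\<tau> u > 1 \<and> (\<forall>t\<ge>1. (t < \<tau> u \<longrightarrow> \<phi> (t *\<^sub>R u) > \<mu>) \<and>
      (t = \<tau> u \<longrightarrow> \<phi> (t *\<^sub>R u) = \<mu>) \<and> (t > \<tau> u \<longrightarrow> \<phi> (t *\<^sub>R u) < \<mu>))" if "u \<in> S" for u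
    using \<tau>[OF that] unfolding level_crossing_time_def by auto
  ultimately show ?thesis
    by blast
qed

end
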